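(* (Label weakening.) In DCC, if $\Delta;\Gamma\vdash M:C$, $\Delta;\overline x{:}\overline A,x{:}A\vdash N:B$, and the label $\ell_i$ does not occur in $\Delta$, then $\Delta,\ell_i(\{\overline x{:}\overline A\},x{:}A\mapsto N:B);\Gamma\vdash M:C$.
   Context: DCC: expressions $A,B,L,M,N::=x\mid U_i\mid\Pi x{:}A.B\mid L@M\mid\ell_i\{\overline M\}$, where $\ell_i$ are label names disjoint from variables and $\overline M=M_1,\dots,M_n$ ($n\ge0$). Type contexts $\Gamma::=\cdot\mid\Gamma,x{:}A$; label contexts $\Delta::=\cdot\mid\Delta,\ell_i(\{\overline x{:}\overline A\},x{:}A\mapsto M:B)$ (free-variable telescope $\overline x{:}\overline A$, argument, body, result type). Substitution standard with $\ell\{\overline M\}[N/x]=\ell\{\overline{M[N/x]}\}$. Reduction: $\Delta\vdash\ell\{\overline M\}@N\triangleright L[\overline M/\overline x,N/x]$ when $\ell(\{\overline x{:}\overline A\},x{:}A\mapsto L:B)\in\Delta$. Equivalence $\Delta\vdash M\equiv N$: common reduct, or the $\eta$-rule ($\Delta\vdash L\triangleright^*\ell\{\overline N\}$, $\Delta\vdash M\triangleright^*M'$, $\ell(\{\overline x{:}\overline A\},x{:}A\mapsto N:B)\in\Delta$, $\Delta\vdash N[\overline N/\overline x]\equiv M'@x$ give $\Delta\vdash L\equiv M$) and its symmetric version. Typing $\Delta;\Gamma\vdash M:A$ and formation $\vdash\Delta;\Gamma$ (mutual): variables from a well-formed context, $U_i:U_{i+1}$, $\Pi x{:}A.B:U_{\max(i,j)}$,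 $M@N:B[N/x]$ when $M:\Pi x{:}A.B$ and $N:A$, conversion along $\equiv$ to a type $B:U_i$, and: if $\vdash\Delta;\Gamma$, $\ell(\{\overline x{:}\overline A\},x{:}A\mapsto M:B)\in\Delta$, $|\overline M|=|\overline x|$ and $\Delta;\Gamma\vdash M_k:A_k[M_1/x_1,\dots,M_{k-1}/x_{k-1}]$ for all $k$, then $\Delta;\Gamma\vdash\ell\{\overline M\}:\Pi x{:}A[\overline M/\overline x].B[\overline M/\overline x]$. Formation: $\vdash\cdot;\cdot$; fresh label entries may be added when $\Delta;\overline x{:}\overline A\vdash\Pi x{:}A.B:U_i$ and $\Delta;\overline x{:}\overline A,x{:}A\vdash M:B$; $\vdash\Delta;\Gamma$ and $\Delta;\Gamma\vdash A:U_i$ give $\vdash\Delta;\Gamma,x{:}A$. *)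

theory Defs
  imports Main
begin

text \<open>DCC syntax with de Bruijn indices. Label names are natural numbers.
  Pi A B binds index 0 in B.\<close>

type_synonym lname = nat

datatype tm = Var nat | U nat | Pi tm tm | App tm tm | Lab lname "tm list"

fun ren :: "(nat \<Rightarrow> nat) \<Rightarrow> tm \<Rightarrow> tm" where
  "ren r (Var i) = Var (r i)"
| "ren r (U i) = U i"
| "ren r (Pi A B) = Pi (ren r A) (ren (\<lambda>i. case i of 0 \<Rightarrow> 0 | Suc j \<Rightarrow> Suc (r j)) B)"
| "ren r (App M N) = App (ren r M) (ren r N)"
| "ren r (Lab l Ms) = Lab l (map (ren r) Ms)"

definition lift :: "tm \<Rightarrow> tm" where
  "lift t = ren Suc t"

definition up :: "(nat \<Rightarrow> tm) \<Rightarrow> nat \<Rightarrow> tm" where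
  "up s i = (case i of 0 \<Rightarrow> Var 0 | Suc j \<Rightarrow> lift (s j))"

fun subst :: "(nat \<Rightarrow> tm) \<Rightarrow> tm \<Rightarrow> tm" where
  "subst s (Var i) = s i"
| "subst s (U i) = U i"
| "subst s (Pi A B) = Pi (subst s A) (subst (up s) B)"
| "subst s (App M N) = App (subst s M) (subst s N)"
| "subst s (Lab l Ms) = Lab l (map (subst s) Ms)"

text \<open>Simultaneous substitution of a telescope x_1..x_n := M_1..M_n
  (x_n is index 0); the remaining indices are lowered by n.\<close>
definition inst_sub :: "tm list \<Rightarrow> nat \<Rightarrow> tm" where
  "inst_sub Ms j = (if j < length Ms then rev Ms ! j else Var (j - length Ms))"

definition inst :: "tm list \<Rightarrow> tm \<Rightarrow> tm" where
  "inst Ms t = subst (inst_sub Ms) t"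

text \<open>Label context entry (l, As, A, M, B) = l({xs:As}, x:A |-> M : B).
  As!k lives in context x_1..x_k; A lives in xs; M and B live in xs,x.\<close>
type_synonym lentry = "lname \<times> tm list \<times> tm \<times> tm \<times> tm"
type_synonym lctx = "lentry list"
type_synonym tctx = "tm list"  \<comment> \<open>head = most recent binding\<close>

inductive red1 :: "lctx \<Rightarrow> tm \<Rightarrow> tm \<Rightarrow> bool" for D where
  beta: "(l, As, A, L, B) \<in> set D \<Longrightarrow> red1 D (App (Lab l Ms) N) (inst (Ms @ [N]) L)"
| piL: "red1 D A A' \<Longrightarrow> red1 D (Pi A B) (Pi A' B)"
| piR: "red1 D B B' \<Longrightarrow> red1 D (Pi A B) (Pi A B')"
| appL: "red1 D M M' \<Longrightarrow> red1 D (App M N) (App M' N)"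
| appR: "red1 D N N' \<Longrightarrow> red1 D (App M N) (App M N')"
| lab: "red1 D M M' \<Longrightarrow> red1 D (Lab l (Ms1 @ M # Ms2)) (Lab l (Ms1 @ M' # Ms2))"

abbreviation reds :: "lctx \<Rightarrow> tm \<Rightarrow> tm \<Rightarrow> bool" where
  "reds D \<equiv> (red1 D)\<^sup>*\<^sup>*"

inductive equiv :: "lctx \<Rightarrow> tm \<Rightarrow> tm \<Rightarrow> bool" for D where
  common: "reds D M L \<Longrightarrow> reds D N L \<Longrightarrow> equiv D M N"
| eta1: "reds D L (Lab l Ns) \<Longrightarrow> reds D M M' \<Longrightarrow> (l, As, A, N, B) \<in> set D \<Longrightarrow>
         equiv D (subst (up (inst_sub Ns)) N) (App (lift M') (Var 0)) \<Longrightarrow> equiv D L M"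
| eta2: "reds D L (Lab l Ns) \<Longrightarrow> reds D M M' \<Longrightarrow> (l, As, A, N, B) \<in> set D \<Longrightarrow>
         equiv D (subst (up (inst_sub Ns)) N) (App (lift M') (Var 0)) \<Longrightarrow> equiv D M L"

inductive wf :: "lctx \<Rightarrow> tctx \<Rightarrow> bool"
  and typing :: "lctx \<Rightarrow> tctx \<Rightarrow> tm \<Rightarrow> tm \<Rightarrow> bool" where
  wf_empty: "wf [] []"
| wf_label: "typing D (rev As) (Pi A B) (U i) \<Longrightarrow> typing D (A # rev As) M B \<Longrightarrow>
             l \<notin> fst ` set D \<Longrightarrow> wf (D @ [(l, As, A, M, B)]) []"
| wf_cons: "wf D G \<Longrightarrow> typing D G A (U i) \<Longrightarrow> wf D (A # G)"
| t_var: "wf D G \<Longrightarrow> i < length G \<Longrightarrow> typing D G (Var i) (ren (\<lambda>j. j + Suc i) (G ! i))"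
| t_univ: "wf D G \<Longrightarrow> typing D G (U i) (U (Suc i))"
| t_pi: "typing D G A (U i) \<Longrightarrow> typing D (A # G) B (U j) \<Longrightarrow> typing D G (Pi A B) (U (max i j))"
| t_app: "typing D G M (Pi A B) \<Longrightarrow> typing D G N A \<Longrightarrow> typing D G (App M N) (inst [N] B)"
| t_conv: "typing D G M A \<Longrightarrow> typing D G B (U i) \<Longrightarrow> equiv D A B \<Longrightarrow> typing D G M B"
| t_lab: "wf D G \<Longrightarrow> (l, As, A, M, B) \<in> set D \<Longrightarrow> length Ms = length As \<Longrightarrow>
          (\<forall>k < length Ms. typing D G (Ms ! k) (inst (take k Ms) (As ! k))) \<Longrightarrow>
          typing D G (Lab l Ms) (Pi (inst Ms A) (subst (up (inst_sub Ms)) B))"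

end

theory Submission
  imports Defs
begin

text \<open>Typing is monotone in the label context as long as the larger label context is well formed,
  so it suffices to show that the extended label context is well formed, i.e. that Pi x:A. B is a
  type over the telescope. The type A is typed because its context is well formed, and B by
  validity: the type of a well-typed term is itself typed in a universe. Validity rests on the
  substitution lemma (for applications and label instances), which needs conversion to be stable
  under substitution. That holds because formation keeps every label body closed over its
  telescope and every occurrence of a label applied to exactly as many arguments as its
  telescope has entries.\<close>

section \<open>Substitution calculus\<close>

lemma up_0 [simp]: "up s 0 = Var 0"
  by (simp add: up_def)

lemma up_Suc [simp]: "up s (Suc i) = lift (s i)"
  by (simp add: up_def)

lemma up_Var_comp: "up (\<lambda>i. Var (r i)) = (\<lambda>i. Var (case i of 0 \<Rightarrow> 0 | Suc j \<Rightarrow> Suc (r j)))"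
  by (auto simp: lift_def split: nat.split)

lemma ren_as_subst: "ren r t = subst (\<lambda>i. Var (r i)) t"
  by (induction t arbitrary: r) (simp_all add: up_Var_comp)

lemma lift_as_subst: "lift t = subst (\<lambda>i. Var (Suc i)) t"
  by (simp add: lift_def ren_as_subst)

lemma subst_subst_ren: "subst s (subst (\<lambda>i. Var (r i)) t) = subst (\<lambda>i. s (r i)) t"
proof (induction t arbitrary: s r)
  case (Pi A B)
  have "(\<lambda>i. up s (case i of 0 \<Rightarrow> 0 | Suc j \<Rightarrow> Suc (r j))) = up (\<lambda>i. s (r i))"
    by (auto simp: up_def split: nat.split)
  then show ?case using Pi by (simp add: up_Var_comp)
qed auto

lemma ren_ren: "ren r (ren r' t) = ren (\<lambda>i. r (r' i)) t"
  by (simp add: ren_as_subst subst_subst_ren)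

lemma subst_ren_subst:
  "subst (\<lambda>i. Var (r i)) (subst s t) = subst (\<lambda>i. subst (\<lambda>i. Var (r i)) (s i)) t"
proof (induction t arbitrary: s r)
  case (Pi A B)
  have "(\<lambda>i. subst (up (\<lambda>i. Var (r i))) (up s i)) = up (\<lambda>i. subst (\<lambda>i. Var (r i)) (s i))"
    by (auto simp: up_def lift_as_subst subst_subst_ren up_Var_comp split: nat.split)
  then show ?case using Pi by (simp add: up_Var_comp)
qed auto

lemma subst_subst: "subst s (subst s' t) = subst (\<lambda>i. subst s (s' i)) t"
proof (induction t arbitrary: s s')
  case (Pi A B)
  have "(\<lambda>i. subst (up s) (up s' i)) = up (\<lambda>i. subst s (s' i))"
    by (auto simp: up_def lift_as_subst subst_subst_ren subst_ren_subst split: nat.split)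
  then show ?case using Pi by simp
qed auto

lemma subst_Var [simp]: "subst Var t = t"
proof -
  have "up Var = Var"
    by (auto simp: up_def lift_def split: nat.split)
  then show ?thesis
    by (induction t) (simp_all add: map_idI)
qed

fun closed :: "nat \<Rightarrow> tm \<Rightarrow> bool" where
  "closed n (Var i) = (i < n)"
| "closed n (U i) = True"
| "closed n (Pi A B) = (closed n A \<and> closed (Suc n) B)"
| "closed n (App M N) = (closed n M \<and> closed n N)"
| "closed n (Lab l Ms) = (\<forall>M\<in>set Ms. closed n M)"

lemma up_cong: "(\<And>i. i < n \<Longrightarrow> s i = s' i) \<Longrightarrow> i < Suc n \<Longrightarrow> up s i = up s' i"
  by (cases i) auto

lemma subst_closed_cong:
  "closed n t \<Longrightarrow> (\<And>i. i < n \<Longrightarrow> s i = s' i) \<Longrightarrow> subst s t = subst s' t"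
proof (induction t arbitrary: n s s')
  case (Pi A B)
  have "subst s A = subst s' A"
    using Pi.prems by (intro Pi.IH(1)[of n]) auto
  moreover have "subst (up s) B = subst (up s') B"
    using Pi.prems by (intro Pi.IH(2)[of "Suc n"]) (auto intro: up_cong)
  ultimately show ?case by simp
next
  case (App M N)
  then show ?case using App.IH[of n s s'] by simp
next
  case (Lab l Ms)
  have "subst s M = subst s' M" if "M \<in> set Ms" for M
    using that Lab.prems by (intro Lab.IH[of M n]) auto
  then show ?case by simp
qed auto

lemma lift_subst: "subst (up s) (lift t) = lift (subst s t)"
  by (simp add: lift_as_subst subst_subst up_def)

lemma subst_inst_sub: "i < length Ms \<Longrightarrow> subst s (inst_sub Ms i) = inst_sub (map (subst s) Ms) i"
  by (simp add: inst_sub_def rev_map)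

lemma subst_inst: "closed (length Ms) A \<Longrightarrow> subst s (inst Ms A) = inst (map (subst s) Ms) A"
  unfolding inst_def subst_subst by (rule subst_closed_cong) (auto simp: subst_inst_sub)

lemma subst_up_inst:
  "closed (Suc (length Ms)) B \<Longrightarrow>
   subst (up s) (subst (up (inst_sub Ms)) B) = subst (up (inst_sub (map (subst s) Ms))) B"
  unfolding subst_subst
proof (rule subst_closed_cong)
  fix i assume "i < Suc (length Ms)"
  then show "subst (up s) (up (inst_sub Ms) i) = up (inst_sub (map (subst s) Ms)) i"
    by (cases i) (simp_all add: lift_subst subst_inst_sub)
qed

lemma subst_inst1: "subst s (inst [N] B) = inst [subst s N] (subst (up s) B)"
  unfolding inst_def subst_subst
  by (rule arg_cong[where f="\<lambda>f. subst f B"], rule ext)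
     (auto simp: up_def inst_sub_def lift_as_subst subst_subst split: nat.split)

section \<open>Invariants of well-formed label contexts\<close>

lemma typing_wf: "typing D G M T \<Longrightarrow> wf D G"
  by (induction rule: wf_typing.inducts(2)) auto

lemma wf_closed: "wf D G \<Longrightarrow> i < length G \<Longrightarrow> closed (length G - Suc i) (G ! i)"
  and typing_closed: "typing D G M T \<Longrightarrow> closed (length G) M"
proof (induction arbitrary: i and rule: wf_typing.inducts)
  case (wf_cons D G A j)
  then show ?case by (cases i) auto
next
  case (t_lab D G l As A M B Ms)
  then show ?case by (auto simp: in_set_conv_nth)
qed auto

lemma wf_rev_closed: "wf D (rev As) \<Longrightarrow> k < length As \<Longrightarrow> closed k (As ! k)"
  using wf_closed[of D "rev As" "length As - Suc k"] by (simp add: rev_nth)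

text \<open>Arities are recorded because beta commutes with substitution only when the arguments
  exactly fill the telescope over which the label body is closed.\<close>
fun labels_ok :: "lctx \<Rightarrow> tm \<Rightarrow> bool" where
  "labels_ok D (Var i) = True"
| "labels_ok D (U i) = True"
| "labels_ok D (Pi A B) = (labels_ok D A \<and> labels_ok D B)"
| "labels_ok D (App M N) = (labels_ok D M \<and> labels_ok D N)"
| "labels_ok D (Lab l Ms) =
     ((\<exists>As A L B. (l, As, A, L, B) \<in> set D \<and> length As = length Ms) \<and> (\<forall>M\<in>set Ms. labels_ok D M))"

fun entry_ok :: "lctx \<Rightarrow> lentry \<Rightarrow> bool" where
  "entry_ok D (l, As, A, L, B) =
     (labels_ok D A \<and> labels_ok D B \<and> labels_ok D L \<and>
      closed (length As) A \<and> closed (Suc (length As)) B \<and> closed (Suc (length As)) L \<and>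
      (\<forall>k < length As. closed k (As ! k)))"

definition lctx_ok :: "lctx \<Rightarrow> bool" where
  "lctx_ok D \<longleftrightarrow> distinct (map fst D) \<and> (\<forall>e \<in> set D. entry_ok D e)"

lemma lctx_ok_entry: "lctx_ok D \<Longrightarrow> e \<in> set D \<Longrightarrow> entry_ok D e"
  unfolding lctx_ok_def by blast

lemma lctx_ok_unique: "lctx_ok D \<Longrightarrow> (l, e) \<in> set D \<Longrightarrow> (l, e') \<in> set D \<Longrightarrow> e = e'"
  unfolding lctx_ok_def by (meson eq_key_imp_eq_value)

lemma labels_ok_mono: "labels_ok D t \<Longrightarrow> set D \<subseteq> set D' \<Longrightarrow> labels_ok D' t"
  by (induction t) fastforce+

lemma entry_ok_mono: "entry_ok D e \<Longrightarrow> set D \<subseteq> set D' \<Longrightarrow> entry_ok D' e"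
  by (cases e) (auto intro: labels_ok_mono)

lemma labels_ok_ren: "labels_ok D t \<Longrightarrow> labels_ok D (subst (\<lambda>i. Var (r i)) t)"
  by (induction t arbitrary: r) (simp_all add: up_Var_comp)

lemma labels_ok_lift: "labels_ok D t \<Longrightarrow> labels_ok D (lift t)"
  by (simp add: lift_as_subst labels_ok_ren)

lemma labels_ok_subst: "labels_ok D t \<Longrightarrow> (\<And>i. labels_ok D (s i)) \<Longrightarrow> labels_ok D (subst s t)"
proof (induction t arbitrary: s)
  case (Pi A B)
  have "labels_ok D (up s i)" for i
    using Pi.prems by (cases i) (simp_all add: labels_ok_lift)
  with Pi show ?case by simp
qed auto

lemma labels_ok_inst_sub: "\<forall>M\<in>set Ms. labels_ok D M \<Longrightarrow> labels_ok D (inst_sub Ms i)"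
  by (auto simp: inst_sub_def) (metis length_rev nth_mem set_rev)

lemma labels_ok_up_inst_sub: "\<forall>M\<in>set Ms. labels_ok D M \<Longrightarrow> labels_ok D (up (inst_sub Ms) i)"
  by (cases i) (simp_all add: labels_ok_lift labels_ok_inst_sub)

lemma lctx_ok_snoc:
  assumes "lctx_ok D" "l \<notin> fst ` set D" "entry_ok D (l, As, A, L, B)"
  shows "lctx_ok (D @ [(l, As, A, L, B)])"
proof -
  have "set D \<subseteq> set (D @ [(l, As, A, L, B)])" by auto
  with assms show ?thesis
    unfolding lctx_ok_def by (auto simp del: entry_ok.simps intro: entry_ok_mono)
qed

lemma wf_lctx_ok: "wf D G \<Longrightarrow> lctx_ok D \<and> (\<forall>A\<in>set G. labels_ok D A)"
  and typing_lctx_ok: "typing D G M T \<Longrightarrow> lctx_ok D \<and> labels_ok D M \<and> labels_ok D T"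
proof (induction rule: wf_typing.inducts)
  case wf_empty
  then show ?case by (simp add: lctx_ok_def)
next
  case (wf_label D As A B i M l)
  note typing_Pi = \<open>typing D (rev As) (Pi A B) (U i)\<close>
  note typing_M = \<open>typing D (A # rev As) M B\<close>
  have "entry_ok D (l, As, A, M, B)"
    using wf_label.IH typing_closed[OF typing_Pi] typing_closed[OF typing_M]
      wf_rev_closed[OF typing_wf[OF typing_Pi]] by simp
  with wf_label show ?case by (simp add: lctx_ok_snoc)
next
  case (t_var D G i)
  then show ?case by (auto simp: ren_as_subst intro!: labels_ok_ren)
next
  case (t_app D G M A B N)
  then show ?case by (auto simp: inst_def intro!: labels_ok_subst labels_ok_inst_sub)
next
  case (t_lab D G l As A M B Ms)
  have "lctx_ok D" using t_lab.IH by simp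
  then have "labels_ok D A" "labels_ok D B"
    using lctx_ok_entry \<open>(l, As, A, M, B) \<in> set D\<close> by fastforce+
  moreover have "\<forall>M\<in>set Ms. labels_ok D M" using t_lab.IH by (auto simp: in_set_conv_nth)
  ultimately show ?case using \<open>lctx_ok D\<close> \<open>(l, As, A, M, B) \<in> set D\<close> \<open>length Ms = length As\<close>
    by (auto simp: inst_def intro!: labels_ok_subst labels_ok_inst_sub labels_ok_up_inst_sub)
qed auto

section \<open>Conversion under label extension and substitution\<close>

lemma red1_mono: "red1 D X Y \<Longrightarrow> set D \<subseteq> set D' \<Longrightarrow> red1 D' X Y"
  by (induction rule: red1.induct) (auto intro: red1.intros)

lemma reds_mono: "reds D X Y \<Longrightarrow> set D \<subseteq> set D' \<Longrightarrow> reds D' X Y"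
  by (induction rule: rtranclp_induct) (auto intro: red1_mono rtranclp.rtrancl_into_rtrancl)

lemma equiv_mono: "equiv D X Y \<Longrightarrow> set D \<subseteq> set D' \<Longrightarrow> equiv D' X Y"
proof (induction rule: equiv.induct)
  case (common M L N)
  then show ?case by (meson equiv.common reds_mono)
next
  case (eta1 L l Ns M M' As A N B)
  then show ?case by (meson equiv.eta1 reds_mono subsetD)
next
  case (eta2 L l Ns M M' As A N B)
  then show ?case by (meson equiv.eta2 reds_mono subsetD)
qed

lemma wf_lctx_mono: "wf D G \<Longrightarrow> wf D' [] \<Longrightarrow> set D \<subseteq> set D' \<Longrightarrow> wf D' G"
  and typing_lctx_mono: "typing D G M T \<Longrightarrow> wf D' [] \<Longrightarrow> set D \<subseteq> set D' \<Longrightarrow> typing D' G M T"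
proof (induction rule: wf_typing.inducts)
  case (t_var D G i)
  then show ?case by (blast intro: wf_typing.t_var)
next
  case (t_conv D G M A B i)
  then show ?case by (blast intro: wf_typing.t_conv equiv_mono)
next
  case (t_lab D G l As A M B Ms)
  then show ?case by (intro wf_typing.t_lab) blast+
qed (auto intro: wf_typing.intros)

lemma red1_labels_ok: "red1 D X Y \<Longrightarrow> lctx_ok D \<Longrightarrow> labels_ok D X \<Longrightarrow> labels_ok D Y"
proof (induction rule: red1.induct)
  case (beta l As A L B Ms N)
  have "labels_ok D L" using lctx_ok_entry[OF beta(2,1)] by simp
  with beta show ?case
    unfolding inst_def by (auto intro!: labels_ok_subst labels_ok_inst_sub)
qed auto

lemma reds_labels_ok: "reds D X Y \<Longrightarrow> lctx_ok D \<Longrightarrow> labels_ok D X \<Longrightarrow> labels_ok D Y"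
  by (induction rule: rtranclp_induct) (auto intro: red1_labels_ok)

lemma red1_subst: "red1 D X Y \<Longrightarrow> lctx_ok D \<Longrightarrow> labels_ok D X \<Longrightarrow> red1 D (subst s X) (subst s Y)"
proof (induction arbitrary: s rule: red1.induct)
  case (beta l As A L B Ms N)
  then obtain As' A' L' B' where "(l, As', A', L', B') \<in> set D" "length As' = length Ms"
    by auto
  with beta have "length As = length Ms"
    using lctx_ok_unique by fastforce
  moreover have "closed (Suc (length As)) L"
    using lctx_ok_entry[OF beta(2,1)] by simp
  ultimately have "subst s (inst (Ms @ [N]) L) = inst (map (subst s) (Ms @ [N])) L"
    by (intro subst_inst) simp
  then show ?case using red1.beta[OF beta(1), of "map (subst s) Ms" "subst s N"] by simp
next
  case (lab M M' l Ms1 Ms2)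
  then show ?case using red1.lab by simp
qed (auto intro: red1.intros)

lemma reds_subst: "reds D X Y \<Longrightarrow> lctx_ok D \<Longrightarrow> labels_ok D X \<Longrightarrow> reds D (subst s X) (subst s Y)"
proof (induction rule: rtranclp_induct)
  case (step Y Z)
  then show ?case
    by (meson red1_subst reds_labels_ok rtranclp.rtrancl_into_rtrancl)
qed simp

lemma eta_subst:
  assumes ok: "lctx_ok D" and entry: "(l, As, A, N, B) \<in> set D"
    and L: "reds D L (Lab l Ns)" "labels_ok D L"
    and M: "reds D M M'" "labels_ok D M"
    and IH: "labels_ok D (subst (up (inst_sub Ns)) N) \<Longrightarrow> labels_ok D (App (lift M') (Var 0)) \<Longrightarrow>
      equiv D (subst (up s) (subst (up (inst_sub Ns)) N)) (subst (up s) (App (lift M') (Var 0)))"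
  shows "reds D (subst s L) (Lab l (map (subst s) Ns))" "reds D (subst s M) (subst s M')"
    and "equiv D (subst (up (inst_sub (map (subst s) Ns))) N) (App (lift (subst s M')) (Var 0))"
proof -
  show "reds D (subst s L) (Lab l (map (subst s) Ns))" "reds D (subst s M) (subst s M')"
    using reds_subst[OF L(1) ok L(2)] reds_subst[OF M(1) ok M(2)] by simp_all
  have Ns: "labels_ok D (Lab l Ns)" and M': "labels_ok D M'"
    using reds_labels_ok ok L M by blast+
  then obtain As' A' N' B' where "(l, As', A', N', B') \<in> set D" "length As' = length Ns"
    by auto
  with ok entry have "length As = length Ns"
    using lctx_ok_unique by fastforce
  with lctx_ok_entry[OF ok entry] have "closed (Suc (length Ns)) N" "labels_ok D N"
    by simp_all
  moreover have "labels_ok D (subst (up (inst_sub Ns)) N)"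
    using Ns \<open>labels_ok D N\<close> by (auto intro: labels_ok_subst labels_ok_up_inst_sub)
  ultimately show "equiv D (subst (up (inst_sub (map (subst s) Ns))) N) (App (lift (subst s M')) (Var 0))"
    using IH M' by (simp add: subst_up_inst lift_subst labels_ok_lift)
qed

lemma equiv_subst:
  "equiv D X Y \<Longrightarrow> lctx_ok D \<Longrightarrow> labels_ok D X \<Longrightarrow> labels_ok D Y \<Longrightarrow>
   equiv D (subst s X) (subst s Y)"
proof (induction arbitrary: s rule: equiv.induct)
  case (common M L N)
  then show ?case by (meson equiv.common reds_subst)
next
  case (eta1 L l Ns M M' As A N B)
  from eta_subst[OF eta1.prems(1) eta1.hyps(3,1) eta1.prems(2) eta1.hyps(2) eta1.prems(3)] eta1
  show ?case by (meson equiv.eta1)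
next
  case (eta2 L l Ns M M' As A N B)
  from eta_subst[OF eta2.prems(1) eta2.hyps(3,1) eta2.prems(3) eta2.hyps(2) eta2.prems(2)] eta2
  show ?case by (meson equiv.eta2)
qed

section \<open>Renaming, substitution and validity\<close>

definition ctx_type :: "tctx \<Rightarrow> nat \<Rightarrow> tm" where
  "ctx_type G i = ren (\<lambda>j. j + Suc i) (G ! i)"

lemma ctx_type_Cons_0 [simp]: "ctx_type (A # G) 0 = lift A"
  by (simp add: ctx_type_def lift_def)

lemma ctx_type_Cons_Suc [simp]: "ctx_type (A # G) (Suc i) = lift (ctx_type G i)"
  by (simp add: ctx_type_def lift_def ren_ren)

lemma typing_Var: "wf D G \<Longrightarrow> i < length G \<Longrightarrow> typing D G (Var i) (ctx_type G i)"
  unfolding ctx_type_def by (rule wf_typing.t_var)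

definition subst_typed :: "lctx \<Rightarrow> tctx \<Rightarrow> (nat \<Rightarrow> tm) \<Rightarrow> tctx \<Rightarrow> bool" where
  "subst_typed D G' s G \<longleftrightarrow>
     wf D G' \<and> (\<forall>i < length G. typing D G' (s i) (subst s (ctx_type G i)))"

definition ren_typed :: "lctx \<Rightarrow> tctx \<Rightarrow> (nat \<Rightarrow> nat) \<Rightarrow> tctx \<Rightarrow> bool" where
  "ren_typed D G' r G \<longleftrightarrow>
     wf D G' \<and> (\<forall>i < length G. r i < length G' \<and> ctx_type G' (r i) = ren r (ctx_type G i))"

text \<open>One induction serves both renamings and typed substitutions: it only needs a class of
  typed substitutions closed under going under a binder.\<close>
lemma typing_subst_general:
  assumes "typing D G M T" and "P D G' s G"
    and typed: "\<And>D G' s G. P D G' s G \<Longrightarrow> subst_typed D G' s G"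
    and up: "\<And>D G' s G A i. P D G' s G \<Longrightarrow> typing D G' (subst s A) (U i) \<Longrightarrow>
      P D (subst s A # G') (up s) (A # G)"
  shows "typing D G' (subst s M) (subst s T)"
  using assms(1,2)
proof (induction arbitrary: G' s rule: wf_typing.inducts(2)[where ?P1.0 = "\<lambda>_ _. True"])
  case (t_var D G i)
  then show ?case using typed unfolding subst_typed_def ctx_type_def by auto
next
  case (t_univ D G i)
  then show ?case using typed unfolding subst_typed_def by (simp add: wf_typing.t_univ)
next
  case (t_pi D G A i B j)
  then have A: "typing D G' (subst s A) (U i)" by simp
  with t_pi have "typing D (subst s A # G') (subst (up s) B) (U j)"
    using up by fastforce
  with A show ?case by (simp add: wf_typing.t_pi)
next
  case (t_app D G M A B N)
  have "typing D G' (subst s M) (Pi (subst s A) (subst (up s) B))"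
    and "typing D G' (subst s N) (subst s A)"
    using t_app by simp_all
  then show ?case by (simp add: subst_inst1 wf_typing.t_app)
next
  case (t_conv D G M A B i)
  have "lctx_ok D" "labels_ok D A" "labels_ok D B"
    using typing_lctx_ok \<open>typing D G M A\<close> \<open>typing D G B (U i)\<close> by blast+
  with t_conv have "equiv D (subst s A) (subst s B)" by (simp add: equiv_subst)
  moreover have "typing D G' (subst s M) (subst s A)" "typing D G' (subst s B) (U i)"
    using t_conv by simp_all
  ultimately show ?case by (blast intro: wf_typing.t_conv)
next
  case (t_lab D G l As A M B Ms)
  have "entry_ok D (l, As, A, M, B)"
    using lctx_ok_entry wf_lctx_ok \<open>wf D G\<close> \<open>(l, As, A, M, B) \<in> set D\<close> by blast
  then have closed: "closed (length As) A" "closed (Suc (length As)) B"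
    "\<forall>k < length As. closed k (As ! k)"
    by simp_all
  let ?Ms = "map (subst s) Ms"
  have "typing D G' (?Ms ! k) (inst (take k ?Ms) (As ! k))" if "k < length ?Ms" for k
  proof -
    have "typing D G' (subst s (Ms ! k)) (subst s (inst (take k Ms) (As ! k)))"
      using t_lab.IH t_lab.prems that by simp
    moreover have "subst s (inst (take k Ms) (As ! k)) = inst (map (subst s) (take k Ms)) (As ! k)"
      using closed(3) that \<open>length Ms = length As\<close> by (intro subst_inst) auto
    ultimately show ?thesis using that by (simp add: take_map)
  qed
  moreover have "wf D G'" using typed[OF t_lab.prems] by (simp add: subst_typed_def)
  ultimately have "typing D G' (Lab l ?Ms) (Pi (inst ?Ms A) (subst (up (inst_sub ?Ms)) B))"
    using t_lab.hyps by (intro wf_typing.t_lab) auto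
  then show ?case
    using closed \<open>length Ms = length As\<close> by (simp add: subst_inst subst_up_inst)
qed auto

lemma ren_typed_up:
  assumes "ren_typed D G' r G" and "typing D G' (ren r A) (U i)"
  shows "ren_typed D (ren r A # G') (\<lambda>i. case i of 0 \<Rightarrow> 0 | Suc j \<Rightarrow> Suc (r j)) (A # G)"
  using assms wf_typing.wf_cons[OF _ assms(2)]
  unfolding ren_typed_def by (auto simp: lift_def ren_ren split: nat.split)

lemma ren_typed_subst_typed: "ren_typed D G' r G \<Longrightarrow> subst_typed D G' (\<lambda>i. Var (r i)) G"
  unfolding ren_typed_def subst_typed_def by (metis ren_as_subst typing_Var)

lemma typing_ren:
  assumes "typing D G M T" and "ren_typed D G' r G"
  shows "typing D G' (ren r M) (ren r T)"
proof -
  let ?P = "\<lambda>D G' s G. \<exists>r. s = (\<lambda>i. Var (r i)) \<and> ren_typed D G' r G"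
  have "typing D G' (subst (\<lambda>i. Var (r i)) M) (subst (\<lambda>i. Var (r i)) T)"
  proof (rule typing_subst_general[where P = ?P])
    show "?P D G' (\<lambda>i. Var (r i)) G" using assms(2) by blast
  next
    fix D G' s G assume "?P D G' s G"
    then show "subst_typed D G' s G" by (auto intro: ren_typed_subst_typed)
  next
    fix D G' s G A i assume "?P D G' s G" and A: "typing D G' (subst s A) (U i)"
    then obtain r where "s = (\<lambda>i. Var (r i))" "ren_typed D G' r G" by blast
    with A show "?P D (subst s A # G') (up s) (A # G)"
      using ren_typed_up[of D G' r G A i] by (auto simp: up_Var_comp ren_as_subst)
  qed (fact assms(1))
  then show ?thesis by (simp add: ren_as_subst)
qed

lemma typing_weaken: "typing D G M T \<Longrightarrow> wf D (X # G) \<Longrightarrow> typing D (X # G) (lift M) (lift T)"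
  unfolding lift_def by (erule typing_ren) (simp add: ren_typed_def lift_def)

lemma subst_typed_up:
  assumes "subst_typed D G' s G" and "typing D G' (subst s A) (U i)"
  shows "subst_typed D (subst s A # G') (up s) (A # G)"
proof -
  have wf: "wf D (subst s A # G')" using assms by (simp add: subst_typed_def wf_typing.wf_cons)
  have "typing D (subst s A # G') (up s j) (subst (up s) (ctx_type (A # G) j))"
    if "j < length (A # G)" for j
  proof (cases j)
    case 0
    then show ?thesis using typing_Var[OF wf, of 0] by (simp add: lift_subst)
  next
    case (Suc k)
    then show ?thesis using assms(1) that typing_weaken[OF _ wf]
      by (simp add: subst_typed_def lift_subst)
  qed
  with wf show ?thesis by (simp add: subst_typed_def)
qed

lemma typing_subst: "typing D G M T \<Longrightarrow> subst_typed D G' s G \<Longrightarrow> typing D G' (subst s M) (subst s T)"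
  by (rule typing_subst_general[where P = subst_typed]) (auto intro: subst_typed_up)

lemma wf_Cons_inv: "wf D (A # G) \<Longrightarrow> wf D G \<and> (\<exists>i. typing D G A (U i))"
  by (cases rule: wf.cases) auto

lemma wf_Nil: "wf D G \<Longrightarrow> wf D []"
  by (induction G) (auto dest: wf_Cons_inv)

lemma typing_ctx_type: "wf D G \<Longrightarrow> i < length G \<Longrightarrow> \<exists>u. typing D G (ctx_type G i) (U u)"
proof (induction G arbitrary: i)
  case (Cons A G)
  obtain u where wf: "wf D G" and A: "typing D G A (U u)"
    using wf_Cons_inv[OF Cons.prems(1)] by blast
  show ?case
  proof (cases i)
    case 0
    then show ?thesis using typing_weaken[OF A Cons.prems(1)] by (auto simp: lift_def)
  next
    case (Suc k)
    then obtain v where "typing D G (ctx_type G k) (U v)"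
      using Cons.IH wf Cons.prems(2) by auto
    from typing_weaken[OF this Cons.prems(1)] Suc show ?thesis by (auto simp: lift_def)
  qed
qed simp

lemma typing_Pi_inv: "typing D G X T \<Longrightarrow> X = Pi A B \<Longrightarrow> \<exists>j. typing D (A # G) B (U j)"
  by (induction arbitrary: A B rule: wf_typing.inducts(2)[where ?P1.0 = "\<lambda>_ _. True"]) auto

lemma wf_entry_typed:
  "wf D [] \<Longrightarrow> (l, As, A, L, B) \<in> set D \<Longrightarrow> \<exists>i. typing D (rev As) (Pi A B) (U i)"
proof (induction D rule: rev_induct)
  case (snoc e D)
  from snoc.prems(1) obtain l' As' A' M' B' i where
    e: "e = (l', As', A', M', B')" and typing_e: "typing D (rev As') (Pi A' B') (U i)"
    by (cases rule: wf.cases) auto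
  have "wf D []" using wf_Nil[OF typing_wf[OF typing_e]] .
  with snoc e typing_e obtain j where "typing D (rev As) (Pi A B) (U j)"
    by (cases "(l, As, A, L, B) \<in> set D") auto
  from typing_lctx_mono[OF this snoc.prems(1)] show ?case by auto
qed simp

lemma inst_sub1_lift: "subst (inst_sub [N]) (lift t) = t"
  by (simp add: lift_as_subst subst_subst_ren inst_sub_def)

lemma subst_typed_inst1:
  assumes "typing D G N A"
  shows "subst_typed D G (inst_sub [N]) (A # G)"
proof -
  have wf: "wf D G" using typing_wf[OF assms] .
  have "typing D G (inst_sub [N] j) (subst (inst_sub [N]) (ctx_type (A # G) j))"
    if "j < length (A # G)" for j
    using assms typing_Var[OF wf] that
    by (cases j) (simp_all add: inst_sub1_lift inst_sub_def)
  with wf show ?thesis by (simp add: subst_typed_def)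
qed

lemma inst_sub_shift:
  assumes "closed k t" and "k + Suc i = length Ms"
  shows "subst (inst_sub Ms) (ren (\<lambda>j. j + Suc i) t) = inst (take k Ms) t"
  unfolding ren_as_subst subst_subst_ren inst_def
proof (rule subst_closed_cong[OF assms(1)])
  fix j assume "j < k"
  with assms(2) show "inst_sub Ms (j + Suc i) = inst_sub (take k Ms) j"
    by (auto simp: inst_sub_def rev_nth intro!: arg_cong[where f = "nth Ms"])
qed

lemma subst_typed_inst_sub:
  assumes "wf D G" and "length Ms = length As" and "\<forall>k < length As. closed k (As ! k)"
    and "\<forall>k < length Ms. typing D G (Ms ! k) (inst (take k Ms) (As ! k))"
  shows "subst_typed D G (inst_sub Ms) (rev As)"
proof -
  have "typing D G (inst_sub Ms i) (subst (inst_sub Ms) (ctx_type (rev As) i))"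
    if i: "i < length (rev As)" for i
  proof -
    define k where "k = length As - Suc i"
    have k: "k < length As" "k + Suc i = length Ms"
      using i assms(2) by (simp_all add: k_def)
    have "inst_sub Ms i = Ms ! k" "rev As ! i = As ! k"
      using i assms(2) by (simp_all add: inst_sub_def rev_nth k_def)
    moreover have "subst (inst_sub Ms) (ren (\<lambda>j. j + Suc i) (As ! k)) = inst (take k Ms) (As ! k)"
      using assms(3) k by (intro inst_sub_shift) auto
    ultimately show ?thesis
      using assms(4) k by (simp add: ctx_type_def)
  qed
  with assms(1) show ?thesis by (simp add: subst_typed_def)
qed

lemma typing_type_typed: "typing D G M T \<Longrightarrow> \<exists>u. typing D G T (U u)"
proof (induction rule: wf_typing.inducts(2)[where ?P1.0 = "\<lambda>_ _. True"])
  case (t_var D G i)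
  then show ?case using typing_ctx_type unfolding ctx_type_def by blast
next
  case (t_univ D G i)
  then show ?case by (blast intro: wf_typing.t_univ)
next
  case (t_pi D G A i B j)
  then show ?case by (blast intro: wf_typing.t_univ typing_wf)
next
  case (t_app D G M A B N)
  then obtain j where "typing D (A # G) B (U j)" using typing_Pi_inv by blast
  then have "typing D G (subst (inst_sub [N]) B) (U j)"
    using typing_subst subst_typed_inst1[OF \<open>typing D G N A\<close>] by fastforce
  then show ?case by (auto simp: inst_def)
next
  case (t_lab D G l As A M B Ms)
  obtain u where "typing D (rev As) (Pi A B) (U u)"
    using wf_entry_typed[OF wf_Nil[OF \<open>wf D G\<close>] \<open>(l, As, A, M, B) \<in> set D\<close>] by blast
  moreover have "subst_typed D G (inst_sub Ms) (rev As)"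
    using lctx_ok_entry[OF _ \<open>(l, As, A, M, B) \<in> set D\<close>] wf_lctx_ok[OF \<open>wf D G\<close>] t_lab
    by (intro subst_typed_inst_sub) auto
  ultimately have "typing D G (subst (inst_sub Ms) (Pi A B)) (U u)"
    using typing_subst by fastforce
  then show ?case by (auto simp: inst_def)
qed blast+

theorem lemma3p2:
  assumes "typing D G M C"
      and "typing D (A # rev As) N B"
      and "l \<notin> fst ` set D"
  shows "typing (D @ [(l, As, A, N, B)]) G M C"
proof -
  obtain j where "typing D (A # rev As) B (U j)"
    using typing_type_typed[OF assms(2)] by blast
  moreover obtain i where "typing D (rev As) A (U i)"
    using wf_Cons_inv[OF typing_wf[OF assms(2)]] by blast
  ultimately have "typing D (rev As) (Pi A B) (U (max i j))"
    by (intro wf_typing.t_pi)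
  then have "wf (D @ [(l, As, A, N, B)]) []"
    using assms(2,3) by (rule wf_typing.wf_label)
  with assms(1) show ?thesis
    by (rule typing_lctx_mono) auto
qed

end
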